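(* Let $p$ be an odd prime and $E\subseteq\mathbb{Z}_p^2$. If $E$ tiles $\mathbb{Z}_p^2$ by translation, then $E$ is a spectral set.
   Context: $x\cdot a=x_1a_1+x_2a_2\pmod p$, $\chi(u)=e^{2\pi i u/p}$. $E$ tiles $\mathbb{Z}_p^2$ by translation if there is $T\subseteq\mathbb{Z}_p^2$ such that every $v\in\mathbb{Z}_p^2$ can be written uniquely as $v=e+t$ with $e\in E$, $t\in T$. $E$ is spectral if there is $A\subseteq\mathbb{Z}_p^2$ such that (Completeness) for every $f:E\to\mathbb{C}$ there are complex numbers $(c_a)_{a\in A}$ with $f(x)=\sum_{a\in A}c_a\chi(x\cdot a)$ for all $x\in E$, and (Orthogonality) $\sum_{x\in E}\chi(x\cdot(a-a'))=0$ for all distinct $a,a'\in A$. *)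

theory Defs
  imports Complex_Main "HOL-Computational_Algebra.Primes"
begin

text \<open>The group Z_p^2 is modelled as the set of integer pairs with both
  components in {0..<p}; addition is componentwise modulo p.\<close>

definition Zp2 :: "int \<Rightarrow> (int \<times> int) set" where
  "Zp2 p = {0..<p} \<times> {0..<p}"

definition addp :: "int \<Rightarrow> int \<times> int \<Rightarrow> int \<times> int \<Rightarrow> int \<times> int" where
  "addp p v w = ((fst v + fst w) mod p, (snd v + snd w) mod p)"

definition subp :: "int \<Rightarrow> int \<times> int \<Rightarrow> int \<times> int \<Rightarrow> int \<times> int" where
  "subp p v w = ((fst v - fst w) mod p, (snd v - snd w) mod p)"

definition dotp :: "int \<Rightarrow> int \<times> int \<Rightarrow> int \<times> int \<Rightarrow> int" where
  "dotp p x a = (fst x * fst a + snd x * snd a) mod p"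

definition chi :: "int \<Rightarrow> int \<Rightarrow> complex" where
  "chi p u = exp (2 * of_real pi * \<i> * of_int u / of_int p)"

definition tiles :: "int \<Rightarrow> (int \<times> int) set \<Rightarrow> bool" where
  "tiles p E \<longleftrightarrow> (\<exists>T \<subseteq> Zp2 p. \<forall>v \<in> Zp2 p.
      \<exists>!et. et \<in> E \<times> T \<and> v = addp p (fst et) (snd et))"

definition spectral :: "int \<Rightarrow> (int \<times> int) set \<Rightarrow> bool" where
  "spectral p E \<longleftrightarrow> (\<exists>A \<subseteq> Zp2 p.
      (\<forall>f :: int \<times> int \<Rightarrow> complex. \<exists>c :: int \<times> int \<Rightarrow> complex.
          \<forall>x \<in> E. f x = (\<Sum>a\<in>A. c a * chi p (dotp p x a))) \<and>
      (\<forall>a \<in> A. \<forall>a' \<in> A. a \<noteq> a' \<longrightarrow>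
          (\<Sum>x\<in>E. chi p (dotp p x (subp p a a'))) = 0))"

end

theory Submission
  imports Defs "HOL-Computational_Algebra.Polynomial" "HOL-Analysis.Analysis"
begin

text \<open>
  If E tiles Z_p^2 with translation set T, then |E| |T| = p^2 and the Fourier transforms of
  the indicators satisfy 1_E^(a) 1_T^(a) = 0 for every frequency a \<noteq> 0. So |E| is 1, p or
  p^2, and only |E| = p needs an argument. Then 1_T^ cannot vanish at every a \<noteq> 0, since
  Fourier inversion would force |T| \<in> {0, p^2}; hence 1_E^(a) = 0 for some a \<noteq> 0. Grouping
  E by the value of x \<cdot> a, this is a vanishing combination of p-th roots of unity with
  nonnegative integer coefficients summing to p. Irreducibility of the cyclotomic polynomial
  (Eisenstein) forces all coefficients to be 1, i.e. x \<mapsto> x \<cdot> a maps E bijectively onto Z_p,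
  and then the line {k a | k \<in> Z_p} is a spectrum for E.
\<close>

section \<open>Characters of Z_p^2\<close>

lemma chi_add: "chi p (u + v) = chi p u * chi p v"
  unfolding chi_def by (simp add: exp_add[symmetric] add_divide_distrib algebra_simps)

lemma chi_0 [simp]: "chi p 0 = 1"
  unfolding chi_def by simp

lemma chi_of_nat: "chi p (int c) = chi p 1 ^ c"
  by (induction c) (simp_all add: chi_add)

lemma chi_eq_1_iff:
  assumes "p > 0"
  shows "chi p u = 1 \<longleftrightarrow> p dvd u"
proof -
  have "chi p u = 1 \<longleftrightarrow> (\<exists>n::int. 2 * pi * u / p = of_int (2 * n) * pi)"
    unfolding chi_def exp_eq_1 by simp
  also have "\<dots> \<longleftrightarrow> (\<exists>n::int. u = n * p)"
  proof -
    have "2 * pi * u / p = of_int (2 * n) * pi \<longleftrightarrow> real_of_int u = real_of_int (n * p)" for n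
      using assms by (simp add: field_simps)
    then show ?thesis
      by (metis of_int_eq_iff)
  qed
  also have "\<dots> \<longleftrightarrow> p dvd u"
    by (auto simp: dvd_def mult.commute)
  finally show ?thesis .
qed

lemma chi_mod:
  assumes "p > 0"
  shows "chi p (u mod p) = chi p u"
proof -
  have "chi p u = chi p (u mod p) * chi p (p * (u div p))"
    by (metis chi_add mod_mult_div_eq)
  then show ?thesis
    using chi_eq_1_iff[OF assms] by simp
qed

lemma chi_cong:
  assumes "p > 0" "u mod p = v mod p"
  shows "chi p u = chi p v"
  by (metis assms chi_mod)

lemma sum_chi_multiples:
  assumes "p > 0"
  shows "(\<Sum>k\<in>{0..<p}. chi p (k * m)) = (if p dvd m then of_int p else 0)"
proof (cases "p dvd m")
  case True
  then have "chi p (k * m) = 1" for k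
    using chi_eq_1_iff[OF assms] by simp
  then show ?thesis
    using True assms by simp
next
  case False
  define S where "S = (\<Sum>k\<in>{0..<p}. chi p (k * m))"
  have "chi p m * S = (\<Sum>k\<in>{1..<p+1}. chi p (k * m))"
    unfolding S_def sum_distrib_left
    by (rule sum.reindex_bij_witness[of _ "\<lambda>k. k - 1" "\<lambda>k. k + 1"])
       (auto simp: chi_add[symmetric] algebra_simps)
  also have "\<dots> = (\<Sum>k\<in>{1..<p}. chi p (k * m)) + chi p (p * m)"
  proof -
    have "{1..<p+1} = insert p {1..<p}"
      using assms by auto
    then show ?thesis
      by simp
  qed
  also have "\<dots> = S"
  proof -
    have "{0..<p} = insert 0 {1..<p}"
      using assms by auto
    then show ?thesis
      using chi_eq_1_iff[OF assms, of "p * m"] by (simp add: S_def add.commute)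
  qed
  finally have "(chi p m - 1) * S = 0"
    by (simp add: algebra_simps)
  moreover have "chi p m \<noteq> 1"
    using chi_eq_1_iff[OF assms] False by simp
  ultimately show ?thesis
    using False by (simp add: S_def)
qed

lemma int_eq_if_dvd_diff:
  fixes p k l :: int
  assumes "0 \<le> k" "k < p" "0 \<le> l" "l < p" "p dvd k - l"
  shows "k = l"
  by (metis assms mod_eq_dvd_iff mod_pos_pos_trivial)

lemma int_dvd_iff_eq_0:
  fixes p k :: int
  assumes "0 \<le> k" "k < p"
  shows "p dvd k \<longleftrightarrow> k = 0"
  using assms int_eq_if_dvd_diff[of k p 0] by auto

lemma finite_Zp2 [simp]: "finite (Zp2 p)"
  unfolding Zp2_def by simp

lemma card_Zp2: "p > 0 \<Longrightarrow> card (Zp2 p) = nat p * nat p"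
  unfolding Zp2_def by (simp add: card_cartesian_product)

lemma zero_in_Zp2: "p > 0 \<Longrightarrow> (0, 0) \<in> Zp2 p"
  unfolding Zp2_def by simp

lemma addp_in_Zp2: "p > 0 \<Longrightarrow> addp p a b \<in> Zp2 p"
  by (simp add: addp_def Zp2_def)

lemma subp_in_Zp2: "p > 0 \<Longrightarrow> subp p a b \<in> Zp2 p"
  by (simp add: subp_def Zp2_def)

lemma subp_eq_0_iff:
  assumes "a \<in> Zp2 p" "b \<in> Zp2 p"
  shows "subp p a b = (0, 0) \<longleftrightarrow> a = b"
proof
  assume "subp p a b = (0, 0)"
  then have "p dvd fst a - fst b" "p dvd snd a - snd b"
    unfolding subp_def by auto
  with assms show "a = b"
    unfolding Zp2_def by (auto intro: prod_eqI int_eq_if_dvd_diff)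
qed (simp add: subp_def)

lemma dotp_commute: "dotp p x a = dotp p a x"
  by (simp add: dotp_def mult.commute)

lemma dotp_cong:
  assumes "fst a mod p = fst b mod p" "snd a mod p = snd b mod p"
  shows "dotp p x a = dotp p x b"
  unfolding dotp_def by (intro mod_add_cong mod_mult_cong refl assms)

lemma chi_dotp_diff:
  assumes "p > 0"
  shows "chi p (dotp p x a - dotp p y a) = chi p (dotp p (subp p x y) a)"
proof (rule chi_cong[OF assms])
  have "dotp p (subp p x y) a = dotp p a (fst x - fst y, snd x - snd y)"
    unfolding dotp_commute[of p _ a] subp_def by (rule dotp_cong) simp_all
  then show "(dotp p x a - dotp p y a) mod p = dotp p (subp p x y) a mod p"
    by (simp add: dotp_def mod_diff_eq algebra_simps)
qed

lemma chi_dotp_addp: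
  assumes "p > 0"
  shows "chi p (dotp p (addp p x y) a) = chi p (dotp p x a) * chi p (dotp p y a)"
proof -
  have "dotp p (addp p x y) a = dotp p a (fst x + fst y, snd x + snd y)"
    unfolding dotp_commute[of p _ a] addp_def by (rule dotp_cong) simp_all
  then have "dotp p (addp p x y) a mod p = (dotp p x a + dotp p y a) mod p"
    by (simp add: dotp_def mod_add_eq algebra_simps)
  then have "chi p (dotp p (addp p x y) a) = chi p (dotp p x a + dotp p y a)"
    by (rule chi_cong[OF assms])
  then show ?thesis
    by (simp add: chi_add)
qed

definition char_sum :: "int \<Rightarrow> (int \<times> int) set \<Rightarrow> int \<times> int \<Rightarrow> complex" where
  "char_sum p S a = (\<Sum>x\<in>S. chi p (dotp p x a))"

lemma char_sum_Zp2:
  assumes p: "p > 0" and z: "z \<in> Zp2 p"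
  shows "char_sum p (Zp2 p) z = (if z = (0, 0) then of_int p ^ 2 else 0)"
proof -
  obtain z1 z2 where z12: "z = (z1, z2)" "0 \<le> z1" "z1 < p" "0 \<le> z2" "z2 < p"
    using z unfolding Zp2_def by auto
  have "char_sum p (Zp2 p) z = (\<Sum>x\<in>{0..<p}. \<Sum>y\<in>{0..<p}. chi p (dotp p (x, y) z))"
    unfolding char_sum_def Zp2_def by (simp add: sum.cartesian_product)
  also have "\<dots> = (\<Sum>x\<in>{0..<p}. \<Sum>y\<in>{0..<p}. chi p (x * z1) * chi p (y * z2))"
    unfolding dotp_def z12(1) using p by (simp add: chi_mod chi_add[symmetric] mult.commute)
  also have "\<dots> = (\<Sum>x\<in>{0..<p}. chi p (x * z1)) * (\<Sum>y\<in>{0..<p}. chi p (y * z2))"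
    by (simp add: sum_product)
  also have "\<dots> = (if z = (0, 0) then of_int p ^ 2 else 0)"
  proof -
    have "p dvd z1 \<longleftrightarrow> z1 = 0" "p dvd z2 \<longleftrightarrow> z2 = 0"
      using z12 int_dvd_iff_eq_0 by auto
    then show ?thesis
      unfolding sum_chi_multiples[OF p] z12(1) by (simp add: power2_eq_square)
  qed
  finally show ?thesis .
qed

section \<open>Vanishing sums of p-th roots of unity\<close>

text \<open>For prime n this is the cyclotomic polynomial of order n.\<close>

definition geom_poly :: "nat \<Rightarrow> int poly" where
  "geom_poly n = (\<Sum>k<n. [:0, 1:] ^ k)"

lemma coeff_geom_poly: "coeff (geom_poly n) k = (if k < n then 1 else 0)"
proof -
  have "coeff (geom_poly n) k = (\<Sum>i<n. coeff (monom 1 i :: int poly) k)"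
    unfolding geom_poly_def coeff_sum by (simp add: monom_altdef)
  then show ?thesis
    by simp
qed

lemma degree_geom_poly:
  assumes "n > 0"
  shows "degree (geom_poly n) = n - 1"
proof (rule antisym)
  show "degree (geom_poly n) \<le> n - 1"
    by (rule degree_le) (auto simp: coeff_geom_poly)
  show "n - 1 \<le> degree (geom_poly n)"
    by (rule le_degree) (use assms in \<open>simp add: coeff_geom_poly\<close>)
qed

lemma coeff_geom_poly_shift:
  "coeff (pcompose (geom_poly n) [:1, 1:]) j = int (n choose Suc j)"
proof -
  define Psi where "Psi = pcompose (geom_poly n) [:1, 1:]"
  have "poly ([:0, 1:] * Psi) x = poly ([:1, 1:] ^ n - 1) x" for x :: int
  proof -
    have "poly ([:0, 1:] * Psi) x = x * (\<Sum>k<n. (x + 1) ^ k)"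
      unfolding Psi_def geom_poly_def by (simp add: poly_pcompose poly_sum add.commute)
    also have "\<dots> = (x + 1) ^ n - 1"
      using power_diff_1_eq[of "x + 1" n] by simp
    finally show ?thesis
      by (simp add: add.commute)
  qed
  then have "[:0, 1:] * Psi = [:1, 1:] ^ n - 1"
    using poly_eq_poly_eq_iff by blast
  moreover have "coeff Psi j = coeff ([:0, 1:] * Psi) (Suc j)"
    by simp
  ultimately have "coeff Psi j = coeff ([:1, 1:] ^ n :: int poly) (Suc j)"
    by simp
  also have "\<dots> = int (n choose Suc j)"
  proof (cases "Suc j \<le> n")
    case True
    then show ?thesis
      using coeff_linear_poly_power[OF True, of 1 1] by simp
  next
    case False
    then have "coeff ([:1, 1:] ^ n :: int poly) (Suc j) = 0"
      by (intro coeff_eq_0) (simp add: degree_linear_power)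
    then show ?thesis
      using False by simp
  qed
  finally show ?thesis
    unfolding Psi_def .
qed

lemma least_coeff_not_dvd:
  fixes F :: "'a::comm_semiring_1 poly"
  assumes "\<not> P dvd lead_coeff F"
  obtains i where "i \<le> degree F" "\<not> P dvd coeff F i" "\<And>j. j < i \<Longrightarrow> P dvd coeff F j"
proof -
  define i where "i = (LEAST i. \<not> P dvd coeff F i)"
  have top: "\<not> P dvd coeff F (degree F)"
    using assms by simp
  show thesis
  proof (rule that[of i])
    show "i \<le> degree F"
      unfolding i_def by (rule Least_le) (rule top)
    show "\<not> P dvd coeff F i"
      unfolding i_def by (rule LeastI) (rule top)
    show "P dvd coeff F j" if "j < i" for j
      using not_less_Least that unfolding i_def by blast
  qed
qed

lemma not_dvd_coeff_mult_least:
  fixes F Q :: "int poly"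
  assumes "prime P"
    and "\<not> P dvd coeff F i" "\<And>i'. i' < i \<Longrightarrow> P dvd coeff F i'"
    and "\<not> P dvd coeff Q j" "\<And>j'. j' < j \<Longrightarrow> P dvd coeff Q j'"
  shows "\<not> P dvd coeff (F * Q) (i + j)"
proof
  assume dvd_coeff: "P dvd coeff (F * Q) (i + j)"
  have "coeff (F * Q) (i + j) =
      coeff F i * coeff Q j + (\<Sum>k\<in>{..i + j} - {i}. coeff F k * coeff Q (i + j - k))"
    unfolding coeff_mult by (subst sum.remove[of _ i]) auto
  moreover have "P dvd (\<Sum>k\<in>{..i + j} - {i}. coeff F k * coeff Q (i + j - k))"
  proof (rule dvd_sum)
    fix k assume k: "k \<in> {..i + j} - {i}"
    show "P dvd coeff F k * coeff Q (i + j - k)"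
    proof (cases "k < i")
      case True
      then show ?thesis
        using assms(3) by simp
    next
      case False
      with k have "i + j - k < j"
        by auto
      then show ?thesis
        using assms(5) by simp
    qed
  qed
  ultimately have "P dvd coeff F i * coeff Q j"
    using dvd_coeff by (simp add: dvd_add_left_iff)
  then show False
    using assms(1,2,4) prime_dvd_mult_iff by blast
qed

lemma eisenstein_criterion:
  fixes F Q :: "int poly"
  assumes P: "prime P"
    and lead: "\<not> P dvd lead_coeff (F * Q)"
    and lower: "\<And>j. j < degree (F * Q) \<Longrightarrow> P dvd coeff (F * Q) j"
    and const: "\<not> P ^ 2 dvd coeff (F * Q) 0"
  shows "degree F = 0 \<or> degree Q = 0"
proof (rule ccontr)
  assume "\<not> (degree F = 0 \<or> degree Q = 0)"
  then have pos: "degree F > 0" "degree Q > 0"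
    by auto
  have lead_FQ: "\<not> P dvd lead_coeff F" "\<not> P dvd lead_coeff Q"
    using lead by (auto simp: lead_coeff_mult)
  then have "F \<noteq> 0" "Q \<noteq> 0"
    by auto
  then have deg_FQ: "degree (F * Q) = degree F + degree Q"
    by (rule degree_mult_eq)
  obtain i where i: "i \<le> degree F" "\<not> P dvd coeff F i" "\<And>i'. i' < i \<Longrightarrow> P dvd coeff F i'"
    using least_coeff_not_dvd[OF lead_FQ(1)] by blast
  obtain j where j: "j \<le> degree Q" "\<not> P dvd coeff Q j" "\<And>j'. j' < j \<Longrightarrow> P dvd coeff Q j'"
    using least_coeff_not_dvd[OF lead_FQ(2)] by blast
  have "\<not> i + j < degree (F * Q)"
    using not_dvd_coeff_mult_least[OF P i(2,3) j(2,3)] lower by blast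
  then have "i = degree F" "j = degree Q"
    using i(1) j(1) deg_FQ by linarith+
  then have "P dvd coeff F 0" "P dvd coeff Q 0"
    using i(3) j(3) pos by auto
  then have "P ^ 2 dvd coeff (F * Q) 0"
    by (simp add: power2_eq_square coeff_mult_0 mult_dvd_mono)
  then show False
    using const by contradiction
qed

text \<open>Eisenstein at n for the shifted polynomial, whose coefficients are n choose (j + 1).\<close>

lemma geom_poly_no_proper_factor:
  assumes n: "prime n" and fq: "geom_poly n = f * q"
  shows "degree f = 0 \<or> degree q = 0"
proof -
  define s :: "int poly" where "s = [:1, 1:]"
  define Psi where "Psi = pcompose (geom_poly n) s"
  have coeff_Psi: "coeff Psi j = int (n choose Suc j)" for j
    unfolding Psi_def s_def by (rule coeff_geom_poly_shift)
  have n1: "n > 1"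
    using n prime_gt_1_nat by blast
  have Psi_fq: "Psi = pcompose f s * pcompose q s"
    unfolding Psi_def fq by (simp add: pcompose_mult)
  have deg_Psi: "degree Psi = n - 1"
    unfolding Psi_def s_def using n1 by (simp add: degree_pcompose degree_geom_poly)
  have prime_n: "prime (int n)"
    using n by simp
  have lead: "\<not> int n dvd lead_coeff Psi"
    using n1 by (simp add: deg_Psi coeff_Psi)
  have lower: "int n dvd coeff Psi j" if "j < degree Psi" for j
    using that n1 dvd_choose_prime[OF _ _ _ n, of "Suc j"] by (simp add: deg_Psi coeff_Psi)
  have const: "\<not> (int n) ^ 2 dvd coeff Psi 0"
    using n1 by (simp add: coeff_Psi power2_eq_square)
  have "degree (pcompose f s) = 0 \<or> degree (pcompose q s) = 0"
    by (rule eisenstein_criterion[of "int n" "pcompose f s" "pcompose q s", folded Psi_fq]; fact)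
  then show ?thesis
    by (simp add: s_def degree_pcompose)
qed

lemma map_poly_of_int_add:
  "map_poly (of_int :: int \<Rightarrow> 'a::comm_ring_1) (f + g) = map_poly of_int f + map_poly of_int g"
  by (rule poly_eqI) (simp add: coeff_map_poly)

lemma map_poly_of_int_mult:
  "map_poly (of_int :: int \<Rightarrow> 'a::comm_ring_1) (f * g) = map_poly of_int f * map_poly of_int g"
  by (rule poly_eqI) (simp add: coeff_map_poly coeff_mult)

lemma map_poly_of_int_sum:
  "map_poly (of_int :: int \<Rightarrow> 'a::comm_ring_1) (sum f A) = (\<Sum>x\<in>A. map_poly of_int (f x))"
  by (induction A rule: infinite_finite_induct) (simp_all add: map_poly_of_int_add)

lemma map_poly_of_int_power:
  "map_poly (of_int :: int \<Rightarrow> 'a::comm_ring_1) (f ^ k) = map_poly of_int f ^ k"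
  by (induction k) (simp_all add: map_poly_of_int_mult)

lemma map_poly_of_int_smult:
  "map_poly (of_int :: int \<Rightarrow> 'a::comm_ring_1) (smult c f) = smult (of_int c) (map_poly of_int f)"
  by (rule map_poly_smult) simp_all

lemma poly_map_geom_poly:
  "poly (map_poly (of_int :: int \<Rightarrow> 'a::comm_ring_1) (geom_poly n)) w = (\<Sum>k<n. w ^ k)"
  unfolding geom_poly_def map_poly_of_int_sum map_poly_of_int_power
  by (simp add: poly_sum map_poly_pCons)

text \<open>
  Pseudo-division of g by f leaves a remainder that vanishes at w and has smaller degree, hence
  is 0; since f is primitive, the power of its leading coefficient can then be cancelled.
\<close>

lemma int_poly_dvd_if_minimal_root:
  fixes f g :: "int poly" and w :: "'a::field_char_0"
  assumes f: "content f = 1" "poly (map_poly of_int f) w = 0"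
    and minimal: "\<And>h. h \<noteq> 0 \<Longrightarrow> poly (map_poly of_int h) w = 0 \<Longrightarrow> degree f \<le> degree h"
    and g: "poly (map_poly of_int g) w = 0"
  shows "f dvd g"
proof -
  have "f \<noteq> 0"
    using f(1) by auto
  obtain q r where qr: "pseudo_divmod g f = (q, r)"
    by (cases "pseudo_divmod g f")
  define k where "k = coeff f (degree f) ^ (Suc (degree g) - degree f)"
  have k: "k \<noteq> 0"
    using \<open>f \<noteq> 0\<close> by (simp add: k_def)
  have div: "smult k g = f * q + r" and r: "r = 0 \<or> degree r < degree f"
    using pseudo_divmod[OF \<open>f \<noteq> 0\<close> qr] unfolding k_def by auto
  have "of_int k * poly (map_poly of_int g) w =
      poly (map_poly of_int f) w * poly (map_poly of_int q) w + poly (map_poly (of_int :: int \<Rightarrow> 'a) r) w"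
    using arg_cong[OF div, of "\<lambda>h. poly (map_poly of_int h) w"]
    unfolding map_poly_of_int_smult map_poly_of_int_add map_poly_of_int_mult poly_smult poly_add poly_mult .
  then have "poly (map_poly (of_int :: int \<Rightarrow> 'a) r) w = 0"
    using f(2) g by simp
  then have "r = 0"
    using minimal r by (meson leD)
  with div have kg: "smult k g = f * q"
    by simp
  have "content (f * q) = content (smult k g)"
    by (simp only: kg)
  then have content_q: "content q = \<bar>k\<bar> * content g"
    using f(1) by (simp add: content_mult)
  have "f * q = f * smult (content q) (primitive_part q)"
    by simp
  also have "\<dots> = smult k (f * smult (sgn k * content g) (primitive_part q))"
    unfolding content_q by (simp add: abs_sgn mult.assoc)
  finally have "smult k g = smult k (f * smult (sgn k * content g) (primitive_part q))"
    using kg by simp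
  then have "g = f * smult (sgn k * content g) (primitive_part q)"
    using k smult_cancel by blast
  then show ?thesis
    by (rule dvdI)
qed

lemma degree_ge_if_root_of_geom_poly:
  fixes h :: "int poly" and w :: "'a::field_char_0"
  assumes n: "prime n" and w: "(\<Sum>k<n. w ^ k) = 0"
    and h: "h \<noteq> 0" "poly (map_poly of_int h) w = 0"
  shows "n - 1 \<le> degree h"
proof -
  define S where "S = {h. h \<noteq> 0 \<and> poly (map_poly (of_int :: int \<Rightarrow> 'a) h) w = 0}"
  obtain f0 where f0: "f0 \<in> S" and min0: "\<And>h. h \<in> S \<Longrightarrow> degree f0 \<le> degree h"
    using ex_has_least_nat[of "\<lambda>h. h \<in> S" h degree] h unfolding S_def by blast
  define f where "f = primitive_part f0"
  have "f0 \<noteq> 0"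
    using f0 by (simp add: S_def)
  have deg_f: "degree f = degree f0" and content_f: "content f = 1"
    using \<open>f0 \<noteq> 0\<close> by (simp_all add: f_def)
  have "poly (map_poly (of_int :: int \<Rightarrow> 'a) (smult (content f0) f)) w =
      of_int (content f0) * poly (map_poly of_int f) w"
    by (simp only: map_poly_of_int_smult poly_smult)
  then have "of_int (content f0) * poly (map_poly (of_int :: int \<Rightarrow> 'a) f) w = 0"
    using f0 by (auto simp: f_def S_def)
  then have root_f: "poly (map_poly (of_int :: int \<Rightarrow> 'a) f) w = 0"
    using \<open>f0 \<noteq> 0\<close> by simp
  have "degree f \<le> degree h'"
    if "h' \<noteq> 0" "poly (map_poly (of_int :: int \<Rightarrow> 'a) h') w = 0" for h'
    using min0[of h'] that deg_f by (simp add: S_def)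
  moreover have "poly (map_poly (of_int :: int \<Rightarrow> 'a) (geom_poly n)) w = 0"
    using w by (simp add: poly_map_geom_poly)
  ultimately have "f dvd geom_poly n"
    by (rule int_poly_dvd_if_minimal_root[OF content_f root_f])
  then obtain q where fq: "geom_poly n = f * q"
    by (rule dvdE)
  have "degree f \<noteq> 0"
  proof
    assume "degree f = 0"
    then obtain c where "f = [:c:]"
      by (rule degree_eq_zeroE)
    then show False
      using root_f content_f by (auto simp: map_poly_pCons)
  qed
  then have "degree q = 0"
    using geom_poly_no_proper_factor[OF n fq] by simp
  have "n > 0"
    using n prime_gt_0_nat by blast
  then have "geom_poly n \<noteq> 0"
    using coeff_geom_poly[of n 0] by auto
  then have "f \<noteq> 0" "q \<noteq> 0"
    using fq by auto
  then have "degree f + degree q = n - 1"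
    using degree_mult_eq[of f q] fq degree_geom_poly[OF \<open>n > 0\<close>] by simp
  with \<open>degree q = 0\<close> have "degree f = n - 1"
    by simp
  then show ?thesis
    using min0[of h] h deg_f by (simp add: S_def)
qed

lemma coeffs_eq_if_root_combination_eq_0:
  fixes w :: "'a::field_char_0" and a :: "nat \<Rightarrow> int"
  assumes n: "prime n" and w: "(\<Sum>k<n. w ^ k) = 0"
    and comb: "(\<Sum>k<n. of_int (a k) * w ^ k) = 0" and c: "c < n"
  shows "a c = a (n - 1)"
proof -
  have n1: "n > 1"
    using n prime_gt_1_nat by blast
  define h where "h = (\<Sum>k<n - 1. monom (a k - a (n - 1)) k)"
  have coeff_h: "coeff h k = (if k < n - 1 then a k - a (n - 1) else 0)" for k
    unfolding h_def coeff_sum by simp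
  have "poly (map_poly of_int h) w = (\<Sum>k<n - 1. of_int (a k - a (n - 1)) * w ^ k)"
    unfolding h_def map_poly_of_int_sum by (simp add: poly_sum map_poly_monom poly_monom)
  also have "\<dots> = (\<Sum>k<n. of_int (a k - a (n - 1)) * w ^ k)"
  proof -
    have "{..<n} = insert (n - 1) {..<n - 1}"
      using n1 by auto
    then show ?thesis
      by simp
  qed
  also have "\<dots> = (\<Sum>k<n. of_int (a k) * w ^ k) - of_int (a (n - 1)) * (\<Sum>k<n. w ^ k)"
    by (simp add: algebra_simps sum_subtractf sum_distrib_left sum_distrib_right)
  finally have "poly (map_poly (of_int :: int \<Rightarrow> 'a) h) w = 0"
    using comb w by simp
  moreover have "degree h < n - 1"
    using n1 by (intro degree_lessI) (auto simp: coeff_h)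
  ultimately have "h = 0"
    using degree_ge_if_root_of_geom_poly[OF n w, of h] by (meson leD)
  show ?thesis
  proof (cases "c < n - 1")
    case True
    then show ?thesis
      using coeff_h[of c] \<open>h = 0\<close> by simp
  next
    case False
    then have "c = n - 1"
      using c by linarith
    then show ?thesis
      by simp
  qed
qed

section \<open>Spectral sets\<close>

lemma exists_character_expansion:
  fixes A E :: "(int \<times> int) set" and f :: "int \<times> int \<Rightarrow> complex"
  assumes "finite A" "finite E" "A \<noteq> {}"
    and rows_orthogonal: "\<And>x y. x \<in> E \<Longrightarrow> y \<in> E \<Longrightarrow>
      (\<Sum>a\<in>A. chi p (dotp p x a - dotp p y a)) = (if x = y then of_nat (card A) else 0)"
  shows "\<exists>c. \<forall>x\<in>E. f x = (\<Sum>a\<in>A. c a * chi p (dotp p x a))"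
proof -
  define c where "c a = (\<Sum>y\<in>E. f y * chi p (- dotp p y a)) / of_nat (card A)" for a
  have "(\<Sum>a\<in>A. c a * chi p (dotp p x a)) = f x" if x: "x \<in> E" for x
  proof -
    have "(\<Sum>a\<in>A. c a * chi p (dotp p x a)) =
        (\<Sum>y\<in>E. f y * (\<Sum>a\<in>A. chi p (dotp p x a - dotp p y a))) / of_nat (card A)"
      unfolding c_def sum_divide_distrib sum_distrib_right sum_distrib_left
      by (subst sum.swap) (simp add: chi_add[symmetric] mult.assoc)
    also have "\<dots> = (\<Sum>y\<in>E. if y = x then f y * of_nat (card A) else 0) / of_nat (card A)"
      using rows_orthogonal[OF x] by (intro arg_cong2[where f = "(/)"] sum.cong) auto
    also have "\<dots> = f x"
      using x assms(1-3) by simp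
    finally show ?thesis .
  qed
  then show ?thesis
    by metis
qed

lemma spectralI:
  assumes A: "A \<subseteq> Zp2 p" "A \<noteq> {}" and "finite E"
    and rows_orthogonal: "\<And>x y. x \<in> E \<Longrightarrow> y \<in> E \<Longrightarrow>
      (\<Sum>a\<in>A. chi p (dotp p x a - dotp p y a)) = (if x = y then of_nat (card A) else 0)"
    and orthogonal: "\<And>a a'. a \<in> A \<Longrightarrow> a' \<in> A \<Longrightarrow> a \<noteq> a' \<Longrightarrow> char_sum p E (subp p a a') = 0"
  shows "spectral p E"
proof -
  have "finite A"
    using A(1) by (rule finite_subset) simp
  then have "\<exists>c. \<forall>x\<in>E. f x = (\<Sum>a\<in>A. c a * chi p (dotp p x a))" for f
    using exists_character_expansion A(2) \<open>finite E\<close> rows_orthogonal by blast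
  then show ?thesis
    unfolding spectral_def char_sum_def[symmetric] using A(1) orthogonal by blast
qed

lemma spectral_Zp2:
  assumes p: "p > 0"
  shows "spectral p (Zp2 p)"
proof (rule spectralI)
  show "(\<Sum>a\<in>Zp2 p. chi p (dotp p x a - dotp p y a)) = (if x = y then of_nat (card (Zp2 p)) else 0)"
    if "x \<in> Zp2 p" "y \<in> Zp2 p" for x y
    using that p unfolding chi_dotp_diff[OF p]
    by (simp add: char_sum_Zp2 subp_in_Zp2 subp_eq_0_iff card_Zp2 power2_eq_square
        dotp_commute[of p "subp p x y"] flip: char_sum_def)
  show "char_sum p (Zp2 p) (subp p a a') = 0"
    if "a \<in> Zp2 p" "a' \<in> Zp2 p" "a \<noteq> a'" for a a'
    using that p by (simp add: char_sum_Zp2 subp_in_Zp2 subp_eq_0_iff)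
qed (use zero_in_Zp2[OF p] in auto)

lemma spectral_singleton:
  assumes "p > 0"
  shows "spectral p {e}"
  by (rule spectralI[where A = "{(0, 0)}"]) (simp_all add: zero_in_Zp2 assms)

definition smulp :: "int \<Rightarrow> int \<Rightarrow> int \<times> int \<Rightarrow> int \<times> int" where
  "smulp p k a = ((k * fst a) mod p, (k * snd a) mod p)"

lemma dotp_smulp: "dotp p x (smulp p k a) = k * dotp p x a mod p"
proof -
  have "dotp p x (smulp p k a) = dotp p x (k * fst a, k * snd a)"
    unfolding smulp_def by (rule dotp_cong) simp_all
  then show ?thesis
    by (simp add: dotp_def mod_mult_right_eq algebra_simps)
qed

lemma dotp_subp_smulp: "dotp p x (subp p (smulp p k a) (smulp p l a)) = dotp p x (smulp p (k - l) a)"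
  unfolding subp_def smulp_def by (rule dotp_cong) (simp_all add: mod_simps algebra_simps)

lemma inj_on_smulp:
  assumes "prime p" "a \<in> Zp2 p" "a \<noteq> (0, 0)"
  shows "inj_on (\<lambda>k. smulp p k a) {0..<p}"
proof (rule inj_onI)
  fix k l
  assume kl: "k \<in> {0..<p}" "l \<in> {0..<p}" "smulp p k a = smulp p l a"
  have "\<not> p dvd fst a \<or> \<not> p dvd snd a"
    using assms(2,3) int_dvd_iff_eq_0 unfolding Zp2_def by (auto simp: prod_eq_iff)
  moreover have "p dvd (k - l) * fst a" "p dvd (k - l) * snd a"
    using kl(3) by (simp_all add: smulp_def mod_eq_dvd_iff left_diff_distrib)
  ultimately have "p dvd k - l"
    using assms(1) prime_dvd_mult_iff by blast
  with kl(1,2) show "k = l"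
    using int_eq_if_dvd_diff[of k p l] by simp
qed

text \<open>The spectrum is the line through a.\<close>

lemma spectral_if_bij_betw_dotp:
  assumes pp: "prime p" and a: "a \<in> Zp2 p" "a \<noteq> (0, 0)"
    and bij: "bij_betw (\<lambda>x. dotp p x a) E {0..<p}"
  shows "spectral p E"
proof -
  have p: "p > 0"
    using pp prime_gt_0_int by blast
  have inj: "inj_on (\<lambda>k. smulp p k a) {0..<p}"
    using inj_on_smulp[OF pp a] .
  show ?thesis
  proof (rule spectralI[where A = "(\<lambda>k. smulp p k a) ` {0..<p}"])
    show "(\<lambda>k. smulp p k a) ` {0..<p} \<subseteq> Zp2 p"
      using p unfolding smulp_def Zp2_def by auto
    show "(\<lambda>k. smulp p k a) ` {0..<p} \<noteq> {}" "finite E"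
      using p bij bij_betw_finite by auto
  next
    fix x y
    assume xy: "x \<in> E" "y \<in> E"
    have "chi p (k * dotp p x a mod p - k * dotp p y a mod p) = chi p (k * (dotp p x a - dotp p y a))"
      for k
      using p by (intro chi_cong) (simp_all add: mod_diff_eq right_diff_distrib)
    then have "(\<Sum>b\<in>(\<lambda>k. smulp p k a) ` {0..<p}. chi p (dotp p x b - dotp p y b)) =
        (\<Sum>k\<in>{0..<p}. chi p (k * (dotp p x a - dotp p y a)))"
      unfolding sum.reindex[OF inj] by (simp add: dotp_smulp)
    moreover have "p dvd dotp p x a - dotp p y a \<longleftrightarrow> x = y"
    proof
      assume "p dvd dotp p x a - dotp p y a"
      then have "dotp p x a = dotp p y a"
        using int_eq_if_dvd_diff[of "dotp p x a" p "dotp p y a"] p by (simp add: dotp_def)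
      then show "x = y"
        using inj_on_eq_iff[OF bij_betw_imp_inj_on[OF bij] xy] by simp
    qed simp
    ultimately show "(\<Sum>b\<in>(\<lambda>k. smulp p k a) ` {0..<p}. chi p (dotp p x b - dotp p y b)) =
        (if x = y then of_nat (card ((\<lambda>k. smulp p k a) ` {0..<p})) else 0)"
      using p by (simp add: sum_chi_multiples card_image[OF inj])
  next
    fix b b'
    assume "b \<in> (\<lambda>k. smulp p k a) ` {0..<p}" "b' \<in> (\<lambda>k. smulp p k a) ` {0..<p}" "b \<noteq> b'"
    then obtain k l where kl: "k \<in> {0..<p}" "l \<in> {0..<p}" "k \<noteq> l" "b = smulp p k a" "b' = smulp p l a"
      by blast
    then have "\<not> p dvd k - l"
      using int_eq_if_dvd_diff[of k p l] by auto
    have "char_sum p E (subp p b b') = (\<Sum>x\<in>E. chi p ((k - l) * dotp p x a))"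
      unfolding char_sum_def kl dotp_subp_smulp dotp_smulp chi_mod[OF p] ..
    also have "\<dots> = (\<Sum>c\<in>{0..<p}. chi p ((k - l) * c))"
      using sum.reindex_bij_betw[OF bij, of "\<lambda>c. chi p ((k - l) * c)"] by simp
    also have "\<dots> = 0"
      using \<open>\<not> p dvd k - l\<close> p by (simp add: sum_chi_multiples mult.commute)
    finally show "char_sum p E (subp p b b') = 0" .
  qed
qed

section \<open>Sets of size p with a vanishing Fourier coefficient\<close>

lemma bij_betw_if_card_fibres_eq:
  assumes "finite E" "finite B" "g ` E \<subseteq> B" "card E = card B"
    and fibres: "\<And>b. b \<in> B \<Longrightarrow> card {x\<in>E. g x = b} = k"
  shows "bij_betw g E B"
proof (cases "B = {}")
  case True
  then show ?thesis
    using assms(1,4) by (simp add: bij_betw_def)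
next
  case False
  have "card E = (\<Sum>b\<in>B. card {x\<in>E. g x = b})"
    using sum.group[OF assms(1-3), of "\<lambda>_. 1 :: nat"] by simp
  also have "\<dots> = card B * k"
    using fibres by simp
  finally have "k = 1"
    using assms(2,4) False by simp
  then have singleton: "\<exists>z. {x\<in>E. g x = b} = {z}" if "b \<in> B" for b
    using fibres[OF that] by (simp add: card_1_singleton_iff)
  have "inj_on g E"
  proof (rule inj_onI)
    fix x y
    assume xy: "x \<in> E" "y \<in> E" "g x = g y"
    obtain z where z: "{x'\<in>E. g x' = g x} = {z}"
      using singleton assms(3) xy(1) by blast
    have "x \<in> {x'\<in>E. g x' = g x}" "y \<in> {x'\<in>E. g x' = g x}"
      using xy by simp_all
    then show "x = y"
      unfolding z by simp
  qed
  moreover have "B \<subseteq> g ` E"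
  proof
    fix b
    assume "b \<in> B"
    then obtain z where "{x\<in>E. g x = b} = {z}"
      using singleton by blast
    then have "z \<in> {x\<in>E. g x = b}"
      by simp
    then show "b \<in> g ` E"
      by auto
  qed
  ultimately show ?thesis
    using assms(3) by (simp add: bij_betw_def subset_antisym)
qed

lemma sum_atLeastLessThan_int_nat: "(\<Sum>c\<in>{0..<p}. h c) = (\<Sum>c<nat p. h (int c))"
proof (cases "p \<ge> 0")
  case True
  then have "{0..<p} = int ` {..<nat p}"
    by (simp add: image_int_atLeastLessThan lessThan_atLeast0)
  then show ?thesis
    by (simp add: sum.reindex)
qed simp

text \<open>
  Grouping E by the value of x \<cdot> a turns the vanishing sum into an integer combination of
  p-th roots of unity, whose coefficients (the fibre sizes) must therefore all be equal.
\<close>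

lemma bij_betw_dotp_if_char_sum_eq_0:
  assumes pp: "prime p" and "finite E" "card E = nat p" and vanish: "char_sum p E a = 0"
  shows "bij_betw (\<lambda>x. dotp p x a) E {0..<p}"
proof -
  have p: "p > 0"
    using pp prime_gt_0_int by blast
  define n where "n = nat p"
  have n: "prime n"
    using pp by (simp add: n_def)
  define w where "w = chi p 1"
  define fibre where "fibre c = {x\<in>E. dotp p x a = c}" for c
  have range: "(\<lambda>x. dotp p x a) ` E \<subseteq> {0..<p}"
    using p by (auto simp: dotp_def)
  have "(\<Sum>k<n. w ^ k) = (\<Sum>k\<in>{0..<p}. chi p (k * 1))"
    unfolding sum_atLeastLessThan_int_nat n_def w_def by (simp add: chi_of_nat)
  also have "\<dots> = 0"
    using sum_chi_multiples[OF p, of 1] prime_gt_1_int[OF pp] by simp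
  finally have roots: "(\<Sum>k<n. w ^ k) = 0" .
  have "char_sum p E a = (\<Sum>c\<in>{0..<p}. \<Sum>x\<in>fibre c. chi p (dotp p x a))"
    unfolding char_sum_def fibre_def by (rule sum.group[symmetric, OF assms(2) _ range]) simp
  also have "\<dots> = (\<Sum>c\<in>{0..<p}. of_nat (card (fibre c)) * chi p c)"
    by (intro sum.cong) (auto simp: fibre_def)
  also have "\<dots> = (\<Sum>k<n. of_int (int (card (fibre (int k)))) * w ^ k)"
    unfolding sum_atLeastLessThan_int_nat n_def w_def by (simp add: chi_of_nat)
  finally have comb: "(\<Sum>k<n. of_int (int (card (fibre (int k)))) * w ^ k) = 0"
    using vanish by simp
  have fibres_eq: "card (fibre (int k)) = card (fibre (int (n - 1)))" if "k < n" for k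
    using coeffs_eq_if_root_combination_eq_0[OF n roots comb that] by simp
  have "card (fibre c) = card (fibre (int (n - 1)))" if "c \<in> {0..<p}" for c
  proof -
    have "card (fibre (int (nat c))) = card (fibre (int (n - 1)))"
      using that by (intro fibres_eq) (simp add: n_def)
    moreover have "int (nat c) = c"
      using that by simp
    ultimately show ?thesis
      by simp
  qed
  then show ?thesis
    using assms(2,3) range by (intro bij_betw_if_card_fibres_eq) (auto simp: fibre_def)
qed

section \<open>Tilings\<close>

lemma tiling_bij_betw_addp:
  assumes "p > 0"
    and tiling: "\<forall>v\<in>Zp2 p. \<exists>!et. et \<in> E \<times> T \<and> v = addp p (fst et) (snd et)"
  shows "bij_betw (\<lambda>et. addp p (fst et) (snd et)) (E \<times> T) (Zp2 p)"
proof (rule bij_betw_imageI)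
  show "inj_on (\<lambda>et. addp p (fst et) (snd et)) (E \<times> T)"
  proof (rule inj_onI)
    fix u v
    assume uv: "u \<in> E \<times> T" "v \<in> E \<times> T" "addp p (fst u) (snd u) = addp p (fst v) (snd v)"
    have "\<exists>!et. et \<in> E \<times> T \<and> addp p (fst u) (snd u) = addp p (fst et) (snd et)"
      using tiling addp_in_Zp2[OF assms(1)] by blast
    then show "u = v"
      using uv by blast
  qed
  show "(\<lambda>et. addp p (fst et) (snd et)) ` (E \<times> T) = Zp2 p"
    using tiling addp_in_Zp2[OF assms(1)] by blast
qed

lemma char_sum_mult_if_tiling:
  assumes "p > 0" "bij_betw (\<lambda>et. addp p (fst et) (snd et)) (E \<times> T) (Zp2 p)"
  shows "char_sum p E a * char_sum p T a = char_sum p (Zp2 p) a"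
proof -
  have "char_sum p E a * char_sum p T a = (\<Sum>et\<in>E \<times> T. chi p (dotp p (addp p (fst et) (snd et)) a))"
    unfolding char_sum_def sum_product sum.cartesian_product chi_dotp_addp[OF assms(1)]
    by (simp add: case_prod_beta)
  also have "\<dots> = char_sum p (Zp2 p) a"
    unfolding char_sum_def by (rule sum.reindex_bij_betw[OF assms(2)])
  finally show ?thesis .
qed

text \<open>
  Fourier inversion: summing the transform over all frequencies gives p^2 if 0 \<in> T and 0
  otherwise, while the zero frequency alone already contributes |T|.
\<close>

lemma exists_char_sum_neq_0:
  assumes p: "p > 0" and T: "T \<subseteq> Zp2 p" "T \<noteq> {}" "T \<noteq> Zp2 p"
  shows "\<exists>a\<in>Zp2 p. a \<noteq> (0, 0) \<and> char_sum p T a \<noteq> 0"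
proof (rule ccontr)
  assume "\<not> ?thesis"
  then have vanish: "char_sum p T a = 0" if "a \<in> Zp2 p - {(0, 0)}" for a
    using that by blast
  have finite_T: "finite T"
    using T(1) by (rule finite_subset) simp
  have "(\<Sum>a\<in>Zp2 p. char_sum p T a) = char_sum p T (0, 0)"
    using sum.remove[OF finite_Zp2 zero_in_Zp2[OF p], of "char_sum p T"] vanish by simp
  also have "\<dots> = of_nat (card T)"
    by (simp add: char_sum_def dotp_def)
  finally have card_T: "(\<Sum>a\<in>Zp2 p. char_sum p T a) = of_nat (card T)" .
  have "(\<Sum>a\<in>Zp2 p. char_sum p T a) = (\<Sum>t\<in>T. char_sum p (Zp2 p) t)"
    unfolding char_sum_def
    by (subst sum.swap) (intro sum.cong refl arg_cong[where f = "chi p"] dotp_commute)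
  also have "\<dots> = (\<Sum>t\<in>T. if t = (0, 0) then of_int p ^ 2 else 0)"
    using T(1) by (intro sum.cong refl char_sum_Zp2 p) blast
  also have "\<dots> = of_int (if (0, 0) \<in> T then p ^ 2 else 0)"
    using finite_T by simp
  finally have "of_int (int (card T)) = (of_int (if (0, 0) \<in> T then p ^ 2 else 0) :: complex)"
    using card_T by simp
  then have "int (card T) = (if (0, 0) \<in> T then p ^ 2 else 0)"
    by (simp only: of_int_eq_iff)
  moreover have "0 < card T"
    using T(2) finite_T by (simp add: card_gt_0_iff)
  moreover have "card T < card (Zp2 p)"
    using T(1,3) by (intro psubset_card_mono finite_Zp2 psubsetI)
  then have "int (card T) < p ^ 2"
    using p by (simp add: card_Zp2 power2_eq_square nat_mult_distrib[symmetric] zless_nat_eq_int_zless)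
  ultimately show False
    by (simp split: if_splits)
qed

lemma spectral_if_tile_of_prime_card:
  assumes pp: "prime p" and E: "E \<subseteq> Zp2 p" and T: "T \<subseteq> Zp2 p"
    and tiling: "bij_betw (\<lambda>et. addp p (fst et) (snd et)) (E \<times> T) (Zp2 p)"
    and card_E: "card E = nat p" and card_T: "card T = nat p"
  shows "spectral p E"
proof -
  have p: "p > 1"
    using pp prime_gt_1_int by blast
  have "T \<noteq> {}" "T \<noteq> Zp2 p"
    using card_T card_Zp2[of p] p by auto
  then obtain a where a: "a \<in> Zp2 p" "a \<noteq> (0, 0)" "char_sum p T a \<noteq> 0"
    using exists_char_sum_neq_0[OF _ T] p by auto
  then have "char_sum p E a = 0"
    using char_sum_mult_if_tiling[OF _ tiling, of a] char_sum_Zp2[of p a] p by simp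
  then have "bij_betw (\<lambda>x. dotp p x a) E {0..<p}"
    by (rule bij_betw_dotp_if_char_sum_eq_0[OF pp finite_subset[OF E finite_Zp2] card_E])
  then show ?thesis
    by (rule spectral_if_bij_betw_dotp[OF pp a(1,2)])
qed

lemma card_tile_cases:
  assumes pp: "prime p" and E: "E \<subseteq> Zp2 p" and T: "T \<subseteq> Zp2 p"
    and tiling: "bij_betw (\<lambda>et. addp p (fst et) (snd et)) (E \<times> T) (Zp2 p)"
  obtains "card E = 1" | "card E = nat p" "card T = nat p" | "E = Zp2 p"
proof -
  have p: "p > 0"
    using pp prime_gt_0_int by blast
  have "finite E" "finite T"
    using finite_subset[OF E] finite_subset[OF T] by simp_all
  then have card_ET: "card E * card T = nat p * nat p"
    using bij_betw_same_card[OF tiling] card_Zp2[OF p] by (simp add: card_cartesian_product)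
  then have "card E dvd nat p ^ 2"
    by (metis dvd_triv_left power2_eq_square)
  moreover have "prime (nat p)"
    using pp by simp
  ultimately obtain i where "i \<le> 2" "card E = nat p ^ i"
    by (auto simp: divides_primepow_nat)
  then consider "card E = 1" | "card E = nat p" | "card E = card (Zp2 p)"
  proof -
    from \<open>i \<le> 2\<close> have "i = 0 \<or> i = 1 \<or> i = 2"
      by auto
    then show thesis
      using that \<open>card E = nat p ^ i\<close> card_Zp2[OF p] by (auto simp: power2_eq_square)
  qed
  then show thesis
  proof cases
    case 2
    then have "card T = nat p"
      using card_ET p by simp
    with 2 show thesis
      using that(2) by blast
  next
    case 3
    then show thesis
      using that(3) card_subset_eq[OF finite_Zp2 E] by blast
  qed (use that(1) in blast)
qed

theorem mainTheorem4:
  fixes p :: int and E :: "(int \<times> int) set"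
  assumes "prime p" and "odd p"
    and "E \<subseteq> Zp2 p"
    and "tiles p E"
  shows "spectral p E"
proof -
  \<comment> \<open>The argument does not use that p is odd.\<close>
  have p: "p > 0"
    using assms(1) prime_gt_0_int by blast
  obtain T where T: "T \<subseteq> Zp2 p"
    and unique_sum: "\<forall>v\<in>Zp2 p. \<exists>!et. et \<in> E \<times> T \<and> v = addp p (fst et) (snd et)"
    using assms(4) unfolding tiles_def by blast
  have tiling: "bij_betw (\<lambda>et. addp p (fst et) (snd et)) (E \<times> T) (Zp2 p)"
    using tiling_bij_betw_addp[OF p unique_sum] .
  show ?thesis
  proof (cases rule: card_tile_cases[OF assms(1,3) T tiling])
    case 1
    then show ?thesis
      using spectral_singleton[OF p] by (auto simp: card_1_singleton_iff)
  next
    case 2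
    then show ?thesis
      by (rule spectral_if_tile_of_prime_card[OF assms(1,3) T tiling])
  next
    case 3
    then show ?thesis
      using spectral_Zp2[OF p] by simp
  qed
qed

end
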